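(* If $G$ is a $4$-regular graph on $7$ vertices, then $\mu(G)\le 3$.
   Context: All graphs are finite and simple. For a graph $G=(V,E)$ on $n$ vertices, a fractional vertex cover is a function $f:V\to[0,\infty)$ with $f(u)+f(v)\ge 1$ for every edge $uv\in E$; $\tau^*(G)$ denotes the minimum of $\sum_{v\in V}f(v)$ over all fractional vertex covers. For $E'\subseteq E$ let $G-E'=(V,E\setminus E')$. Define $\mu(G)=\min\{|E'| : E'\subseteq E,\ \tau^*(G-E')<n/2\}$. *)

theory Defs
  imports Complex_Main
begin

definition simple_graph :: "'a set \<Rightarrow> 'a set set \<Rightarrow> bool" where
  "simple_graph V E \<longleftrightarrow> finite V \<and> (\<forall>e\<in>E. e \<subseteq> V \<and> card e = 2)"

definition degree :: "'a set set \<Rightarrow> 'a \<Rightarrow> nat" where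
  "degree E v = card {e \<in> E. v \<in> e}"

definition regular :: "nat \<Rightarrow> 'a set \<Rightarrow> 'a set set \<Rightarrow> bool" where
  "regular k V E \<longleftrightarrow> (\<forall>v\<in>V. degree E v = k)"

definition frac_vertex_cover :: "'a set \<Rightarrow> 'a set set \<Rightarrow> ('a \<Rightarrow> real) \<Rightarrow> bool" where
  "frac_vertex_cover V E f \<longleftrightarrow>
     (\<forall>v\<in>V. f v \<ge> 0) \<and> (\<forall>u v. {u, v} \<in> E \<longrightarrow> f u + f v \<ge> 1)"

text \<open>tau* = minimum (infimum; the LP minimum is attained) of total weight.\<close>
definition tau_star :: "'a set \<Rightarrow> 'a set set \<Rightarrow> real" where
  "tau_star V E = Inf {(\<Sum>v\<in>V. f v) | f. frac_vertex_cover V E f}"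

definition mu :: "'a set \<Rightarrow> 'a set set \<Rightarrow> nat" where
  "mu V E = (LEAST k. \<exists>E'. E' \<subseteq> E \<and> card E' = k \<and> tau_star V (E - E') < real (card V) / 2)"

end

theory Submission
  imports Defs "HOL-Library.Indicator_Function"
begin

text \<open>
  Deleting all edges inside a vertex set \<open>I\<close> makes the indicator function of the complement
  of \<open>I\<close> a fractional vertex cover, so \<open>\<tau>\<^sup>* \<le> |V - I|\<close>. For a 4-regular graph on 7 vertices
  every vertex has exactly two non-neighbours, and from this one finds four vertices
  spanning at least three non-edges: take \<open>a\<close> with non-neighbours \<open>b, c\<close>; if \<open>bc\<close> is a
  non-edge add any fourth vertex, otherwise add the second non-neighbour of \<open>b\<close>. These
  four vertices span at most \<open>6 - 3 = 3\<close> edges, and deleting them leaves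
  \<open>\<tau>\<^sup>* \<le> 3 < 7/2\<close>.
\<close>

lemma tau_star_le_sum:
  assumes "frac_vertex_cover V E f"
  shows "tau_star V E \<le> (\<Sum>v\<in>V. f v)"
proof -
  have "bdd_below {(\<Sum>v\<in>V. f v) | f. frac_vertex_cover V E f}"
    by (rule bdd_belowI[of _ 0]) (auto simp: frac_vertex_cover_def intro: sum_nonneg)
  then show ?thesis
    unfolding tau_star_def using assms by (auto intro: cInf_lower)
qed

lemma frac_vertex_cover_indicator_Compl:
  assumes "\<forall>e\<in>E. \<not> e \<subseteq> I"
  shows "frac_vertex_cover V E (indicator (- I))"
  using assms unfolding frac_vertex_cover_def by (auto simp: indicator_def)

lemma tau_star_delete_inside_le:
  assumes "finite V"
  shows "tau_star V (E - {e\<in>E. e \<subseteq> I}) \<le> card (V - I)"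
proof -
  have "tau_star V (E - {e\<in>E. e \<subseteq> I}) \<le> (\<Sum>v\<in>V. indicator (- I) v)"
    by (intro tau_star_le_sum frac_vertex_cover_indicator_Compl) blast
  also have "\<dots> = card (V - I)"
    using assms by (simp add: indicator_def sum.If_cases Diff_eq Compl_eq)
  finally show ?thesis .
qed

lemma mu_le_card_edges_inside:
  assumes "finite V" and "real (card (V - I)) < real (card V) / 2"
  shows "mu V E \<le> card {e\<in>E. e \<subseteq> I}"
  unfolding mu_def
proof (rule Least_le, intro exI conjI)
  show "tau_star V (E - {e\<in>E. e \<subseteq> I}) < real (card V) / 2"
    using tau_star_delete_inside_le[OF assms(1), of E I] assms(2) by linarith
qed auto

lemma card_edges_inside_le:
  assumes "simple_graph V E" and "finite I"
    and "F \<subseteq> {e. e \<subseteq> I \<and> card e = 2}" and "F \<inter> E = {}"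
  shows "card {e\<in>E. e \<subseteq> I} \<le> (card I choose 2) - card F"
proof -
  let ?P = "{e. e \<subseteq> I \<and> card e = 2}"
  have "finite ?P"
    using assms(2) by simp
  moreover have "{e\<in>E. e \<subseteq> I} \<subseteq> ?P - F"
    using assms(1,4) unfolding simple_graph_def by auto
  ultimately have "card {e\<in>E. e \<subseteq> I} \<le> card (?P - F)"
    by (intro card_mono) auto
  also have "\<dots> = (card I choose 2) - card F"
    using assms(2,3) \<open>finite ?P\<close> by (simp add: card_Diff_subset finite_subset n_subsets)
  finally show ?thesis .
qed

lemma ex_other_of_card_ge_2:
  assumes "2 \<le> card A"
  shows "\<exists>y\<in>A. y \<noteq> x"
proof (rule ccontr)
  assume "\<not> ?thesis"
  then have "A \<subseteq> {x}" by auto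
  then have "card A \<le> 1" using card_mono[of "{x}" A] by simp
  with assms show False by simp
qed

definition non_adjacent :: "'a set \<Rightarrow> 'a set set \<Rightarrow> 'a \<Rightarrow> 'a set" where
  "non_adjacent V E v = {u\<in>V. u \<noteq> v \<and> {u, v} \<notin> E}"

lemma degree_eq_card_adjacent:
  assumes "simple_graph V E"
  shows "degree E v = card {u\<in>V. {u, v} \<in> E}"
proof -
  have "bij_betw (\<lambda>u. {u, v}) {u\<in>V. {u, v} \<in> E} {e\<in>E. v \<in> e}"
  proof (rule bij_betwI')
    fix x y assume "x \<in> {u\<in>V. {u, v} \<in> E}" "y \<in> {u\<in>V. {u, v} \<in> E}"
    then have "x \<noteq> v" "y \<noteq> v"
      using assms unfolding simple_graph_def by fastforce+
    then show "({x, v} = {y, v}) = (x = y)" by (metis doubleton_eq_iff)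
  next
    fix e assume e: "e \<in> {e\<in>E. v \<in> e}"
    then have "card e = 2" "e \<subseteq> V" using assms unfolding simple_graph_def by auto
    then obtain x y where "e = {x, y}" "x \<noteq> y" by (meson card_2_iff)
    then show "\<exists>x\<in>{u\<in>V. {u, v} \<in> E}. e = {x, v}"
      using e \<open>e \<subseteq> V\<close> by (auto simp: insert_commute)
  qed auto
  then show ?thesis
    unfolding degree_def by (simp add: bij_betw_same_card)
qed

lemma card_non_adjacent:
  assumes "simple_graph V E" and "v \<in> V"
  shows "card (non_adjacent V E v) = card V - 1 - degree E v"
proof -
  have "finite V" using assms(1) by (simp add: simple_graph_def)
  have adj: "{u\<in>V. {u, v} \<in> E} \<subseteq> V - {v}"
    using assms(1) unfolding simple_graph_def by fastforce
  have "non_adjacent V E v = (V - {v}) - {u\<in>V. {u, v} \<in> E}"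
    unfolding non_adjacent_def by auto
  then show ?thesis
    using adj assms \<open>finite V\<close>
    by (simp add: card_Diff_subset finite_subset degree_eq_card_adjacent)
qed

lemma ex_four_vertices_three_non_edges:
  assumes "finite V" and "4 \<le> card V" and "\<forall>v\<in>V. 2 \<le> card (non_adjacent V E v)"
  obtains a b c d where "distinct [a, b, c, d]" "{a, b, c, d} \<subseteq> V"
    "{a, b} \<notin> E" "{a, c} \<notin> E" "{b, c} \<notin> E \<or> {b, d} \<notin> E"
proof -
  have "V \<noteq> {}" using assms(2) by auto
  then obtain a where a: "a \<in> V" by blast
  have two: "2 \<le> card (non_adjacent V E a)" using assms(3) a by blast
  obtain b where b: "b \<in> non_adjacent V E a"
    using ex_other_of_card_ge_2[OF two] by blast
  obtain c where c: "c \<in> non_adjacent V E a" "c \<noteq> b"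
    using ex_other_of_card_ge_2[OF two, of b] by blast
  have abc: "{a, b, c} \<subseteq> V" "distinct [a, b, c]" "{a, b} \<notin> E" "{a, c} \<notin> E"
    using a b c unfolding non_adjacent_def by (auto simp: insert_commute)
  show thesis
  proof (cases "{b, c} \<in> E")
    case True
    have two_b: "2 \<le> card (non_adjacent V E b)" using assms(3) abc(1) by simp
    obtain d where d: "d \<in> non_adjacent V E b" "d \<noteq> a"
      using ex_other_of_card_ge_2[OF two_b, of a] by blast
    then have "d \<in> V" "d \<noteq> b" "{b, d} \<notin> E"
      unfolding non_adjacent_def by (auto simp: insert_commute)
    moreover have "d \<noteq> c" using True \<open>{b, d} \<notin> E\<close> by auto
    ultimately show thesis
      using that[of a b c d] abc d(2) by auto
  next
    case False
    have "card {a, b, c} = 3" using abc(2) by simp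
    then have "\<not> V \<subseteq> {a, b, c}" using assms(1,2) card_mono[of "{a, b, c}" V] by auto
    then obtain d where "d \<in> V" "d \<notin> {a, b, c}" by blast
    with False show thesis
      using that[of a b c d] abc by auto
  qed
qed

lemma ex_four_vertices_at_most_three_edges:
  assumes "simple_graph V E" and "4 \<le> card V"
    and "\<forall>v\<in>V. 2 \<le> card (non_adjacent V E v)"
  obtains I where "I \<subseteq> V" "card I = 4" "card {e\<in>E. e \<subseteq> I} \<le> 3"
proof -
  have "finite V" using assms(1) by (simp add: simple_graph_def)
  then obtain a b c d where abcd: "distinct [a, b, c, d]" "{a, b, c, d} \<subseteq> V"
    "{a, b} \<notin> E" "{a, c} \<notin> E" "{b, c} \<notin> E \<or> {b, d} \<notin> E"
    using ex_four_vertices_three_non_edges assms by metis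
  define third where "third = (if {b, c} \<notin> E then {b, c} else {b, d})"
  let ?F = "{{a, b}, {a, c}, third}"
  have "card ?F = 3" "?F \<subseteq> {e. e \<subseteq> {a, b, c, d} \<and> card e = 2}" "?F \<inter> E = {}"
    using abcd unfolding third_def by (auto simp: doubleton_eq_iff)
  then have "card {e\<in>E. e \<subseteq> {a, b, c, d}} \<le> 3"
    using card_edges_inside_le[OF assms(1), of "{a, b, c, d}" ?F] abcd(1)
    by (simp add: numeral_eq_Suc)
  moreover have "card {a, b, c, d} = 4" using abcd(1) by simp
  ultimately show thesis
    using that abcd(2) by blast
qed

theorem lemma32:
  fixes V :: "'a set" and E :: "'a set set"
  assumes "simple_graph V E" and "card V = 7" and "regular 4 V E"
  shows "mu V E \<le> 3"
proof -
  have "finite V" using assms(1) by (simp add: simple_graph_def)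
  have "\<forall>v\<in>V. card (non_adjacent V E v) = 2"
    using assms by (simp add: card_non_adjacent regular_def)
  moreover have "4 \<le> card V" using assms(2) by simp
  ultimately obtain I where I: "I \<subseteq> V" "card I = 4" "card {e\<in>E. e \<subseteq> I} \<le> 3"
    using ex_four_vertices_at_most_three_edges[OF assms(1)] by auto
  have "card (V - I) = 3"
    using I assms(2) \<open>finite V\<close> by (simp add: card_Diff_subset finite_subset)
  then have "mu V E \<le> card {e\<in>E. e \<subseteq> I}"
    using assms(2) \<open>finite V\<close> by (intro mu_le_card_edges_inside) auto
  with I(3) show ?thesis by simp
qed

end
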